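(* Let $X$ be a crowded T$_D$ space. Then: (1) every open neighbourhood $O$ of a point $x\in X$ includes an open neighbourhood $O'$ of $x$ such that $O'-\{x\}$ is non-empty and open; (2) for every open $O\subseteq X$ and every $S\subseteq X$, if $O\subseteq\mathrm{cl}_XS$ then $O\subseteq\mathrm{d}_XS$; (3) $\mathrm{int}_X\mathrm{cl}_XS=\mathrm{int}_X\mathrm{d}_XS$ for every $S\subseteq X$; (4) for every topological model $\mathcal{M}$ on $X$ and every formula $\varphi$, $\mathcal{M}_d(\Diamond^*(\Box^*\varphi\lor\Box^*\neg\varphi))=\mathcal{M}_d(\Diamond(\Box\varphi\lor\Box\neg\varphi))$.
   Context: For $S\subseteq X$, $\mathrm{cl}_X S$, $\mathrm{int}_XS$ are closure and interior, and $\mathrm{d}_XS$ is the set of limit points of $S$ ($x$ such that every $O-\{x\}$, $O$ an open neighbourhood of $x$, meets $S$). $X$ is crowded if it has no isolated points, and T$_D$ if $\mathrm{d}_X\{x\}$ is closed for every $x$. $\Diamond^*\psi$ abbreviates $\psi\lor\Diamond\psi$ and $\Box^*\psi$ abbreviates $\psi\land\Box\psi$. A topological model $\mathcal{M}$ on $X$ is a valuation of propositional variables by subsets of $X$; $\mathcal{M}_d(\varphi)$ is defined inductively with Boolean connectives as set operations, $\mathcal{M}_d(\Diamond\varphi)=\mathrm{d}_X(\mathcal{M}_d(\varphi))$ and $\mathcal{M}_d(\Box\varphi)=\mathcal{M}_d(\neg\Diamond\neg\varphi)$. *)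

theory Defs
  imports "HOL-Analysis.Analysis"
begin

definition crowded :: "'a topology \<Rightarrow> bool" where
  "crowded X \<longleftrightarrow> (\<forall>x\<in>topspace X. \<not> openin X {x})"

definition TD_space :: "'a topology \<Rightarrow> bool" where
  "TD_space X \<longleftrightarrow> (\<forall>x\<in>topspace X. closedin X (X derived_set_of {x}))"

datatype 'v fm =
    Var 'v
  | Bot
  | Neg "'v fm"
  | Conj "'v fm" "'v fm"
  | Disj "'v fm" "'v fm"
  | Imp "'v fm" "'v fm"
  | Dia "'v fm"
  | Box "'v fm"

fun dsem :: "'a topology \<Rightarrow> ('v \<Rightarrow> 'a set) \<Rightarrow> 'v fm \<Rightarrow> 'a set" where
  "dsem X V (Var p) = V p"
| "dsem X V Bot = {}"
| "dsem X V (Neg \<phi>) = topspace X - dsem X V \<phi>"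
| "dsem X V (Conj \<phi> \<psi>) = dsem X V \<phi> \<inter> dsem X V \<psi>"
| "dsem X V (Disj \<phi> \<psi>) = dsem X V \<phi> \<union> dsem X V \<psi>"
| "dsem X V (Imp \<phi> \<psi>) = (topspace X - dsem X V \<phi>) \<union> dsem X V \<psi>"
| "dsem X V (Dia \<phi>) = X derived_set_of (dsem X V \<phi>)"
| "dsem X V (Box \<phi>) = topspace X - X derived_set_of (topspace X - dsem X V \<phi>)"

definition DiaS :: "'v fm \<Rightarrow> 'v fm" where "DiaS \<phi> = Disj \<phi> (Dia \<phi>)"
definition BoxS :: "'v fm \<Rightarrow> 'v fm" where "BoxS \<phi> = Conj \<phi> (Box \<phi>)"

end

theory Submission
  imports Defs
begin

text \<open>
  In a T_D space, \<open>U - d{x}\<close> is an open neighbourhood of \<open>x \<in> U\<close>, and removing \<open>x\<close> from it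
  leaves the open set \<open>U - cl{x}\<close>, which is non-empty when \<open>x\<close> is not isolated. Hence an open
  subset of \<open>cl S\<close> lies in \<open>d S\<close>, so open sets have the same derived set as closure. In the
  d-semantics, \<open>\<box>\<^sup>*\<phi>\<close> denotes the interior of \<open>A = \<lbrakk>\<phi>\<rbrakk>\<close>, while \<open>\<box>\<phi>\<close> denotes the points having a
  punctured neighbourhood inside \<open>A\<close>; these lie in the closure of \<open>int A\<close> by the first
  observation. Both sides of (4) are therefore the closure of \<open>int A \<union> int (X - A)\<close>.
\<close>

lemma crowded_TD_open_punctured_nbhd:
  assumes "crowded X" "TD_space X" "openin X U" "x \<in> U"
  shows "\<exists>U'. openin X U' \<and> x \<in> U' \<and> U' \<subseteq> U \<and> U' - {x} \<noteq> {} \<and> openin X (U' - {x})"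
proof -
  have x: "x \<in> topspace X"
    using assms(3,4) openin_subset by blast
  define U' where "U' = U - X derived_set_of {x}"
  have "openin X U'"
    unfolding U'_def using assms(2,3) x by (auto simp: TD_space_def)
  moreover have "x \<in> U'"
    unfolding U'_def using assms(4) by (auto simp: in_derived_set_of)
  moreover have "U' - {x} = U - X closure_of {x}"
    unfolding U'_def closure_of_alt using x by auto
  then have "openin X (U' - {x})"
    using assms(3) by (simp add: openin_diff)
  moreover have "U' \<noteq> {x}"
    using assms(1) x \<open>openin X U'\<close> by (auto simp: crowded_def)
  ultimately show ?thesis
    unfolding U'_def by blast
qed

lemma crowded_TD_open_subset_closure_of_imp_derived_set_of:
  assumes "crowded X" "TD_space X" "openin X U" "U \<subseteq> X closure_of S"
  shows "U \<subseteq> X derived_set_of S"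
proof
  fix x assume "x \<in> U"
  then have x: "x \<in> topspace X"
    using assms(3) openin_subset by blast
  have "\<exists>y. y \<noteq> x \<and> y \<in> S \<and> y \<in> T" if "x \<in> T" "openin X T" for T
  proof -
    have "openin X (U \<inter> T)"
      using assms(3) that(2) by (rule openin_Int)
    moreover have "x \<in> U \<inter> T"
      using \<open>x \<in> U\<close> that(1) by blast
    ultimately obtain U' where U': "U' \<subseteq> U \<inter> T" "U' - {x} \<noteq> {}" "openin X (U' - {x})"
      using crowded_TD_open_punctured_nbhd[OF assms(1,2)] by meson
    have "(U' - {x}) \<inter> X closure_of S \<noteq> {}"
      using U'(1,2) assms(4) by blast
    then have "(U' - {x}) \<inter> S \<noteq> {}"
      using openin_Int_closure_of_eq_empty[OF U'(3)] by blast
    then show ?thesis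
      using U'(1) by blast
  qed
  then show "x \<in> X derived_set_of S"
    using x by (simp add: in_derived_set_of)
qed

lemma crowded_TD_derived_set_of_open:
  assumes "crowded X" "TD_space X" "openin X U"
  shows "X derived_set_of U = X closure_of U"
proof
  show "X derived_set_of U \<subseteq> X closure_of U"
    by (rule derived_set_of_subset_closure_of)
  have "U \<subseteq> X derived_set_of U"
    using crowded_TD_open_subset_closure_of_imp_derived_set_of[OF assms]
      closure_of_subset[OF openin_subset[OF assms(3)]] by blast
  then show "X closure_of U \<subseteq> X derived_set_of U"
    by (auto simp: closure_of_alt)
qed

lemma crowded_TD_derived_set_of_between_open_and_closure:
  assumes "crowded X" "TD_space X" "openin X U" "U \<subseteq> S" "S \<subseteq> X closure_of U"
  shows "X derived_set_of S = X closure_of U"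
proof -
  have "X derived_set_of S \<subseteq> X closure_of U"
    using derived_set_of_subset_closure_of closure_of_mono[OF assms(5)] by fastforce
  moreover have "X derived_set_of U \<subseteq> X derived_set_of S"
    using assms(4) by (rule derived_set_of_mono)
  ultimately show ?thesis
    using crowded_TD_derived_set_of_open[OF assms(1-3)] by blast
qed

lemma crowded_TD_interior_of_closure_of_eq_derived_set_of:
  assumes "crowded X" "TD_space X"
  shows "X interior_of (X closure_of S) = X interior_of (X derived_set_of S)"
proof
  show "X interior_of (X closure_of S) \<subseteq> X interior_of (X derived_set_of S)"
    by (intro interior_of_maximal crowded_TD_open_subset_closure_of_imp_derived_set_of[OF assms]
        interior_of_subset openin_interior_of)
  show "X interior_of (X derived_set_of S) \<subseteq> X interior_of (X closure_of S)"
    by (rule interior_of_mono[OF derived_set_of_subset_closure_of])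
qed

definition punctured_interior_of :: "'a topology \<Rightarrow> 'a set \<Rightarrow> 'a set" where
  "punctured_interior_of X A = topspace X - X derived_set_of (topspace X - A)"

lemma in_punctured_interior_of:
  "y \<in> punctured_interior_of X A \<longleftrightarrow>
     y \<in> topspace X \<and> (\<exists>T. openin X T \<and> y \<in> T \<and> T - {y} \<subseteq> A)"
proof -
  have "T - {y} \<subseteq> A \<longleftrightarrow> \<not> (\<exists>z. z \<noteq> y \<and> z \<in> topspace X - A \<and> z \<in> T)" if "openin X T" for T
    using openin_subset[OF that] by blast
  then show ?thesis
    unfolding punctured_interior_of_def Diff_iff in_derived_set_of by blast
qed

lemma Int_punctured_interior_of_eq_interior_of:
  assumes "A \<subseteq> topspace X"
  shows "A \<inter> punctured_interior_of X A = X interior_of A"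
  using assms by (auto simp: punctured_interior_of_def interior_of_closure_of closure_of_alt)

lemma crowded_TD_punctured_interior_of_subset_closure_of_interior_of:
  assumes "crowded X" "TD_space X"
  shows "punctured_interior_of X A \<subseteq> X closure_of (X interior_of A)"
proof
  fix y assume y: "y \<in> punctured_interior_of X A"
  then obtain T where T: "openin X T" "y \<in> T" "T - {y} \<subseteq> A"
    by (auto simp: in_punctured_interior_of)
  have "\<exists>z. z \<in> X interior_of A \<and> z \<in> W" if "y \<in> W" "openin X W" for W
  proof -
    have "openin X (W \<inter> T)"
      using that(2) T(1) by (rule openin_Int)
    moreover have "y \<in> W \<inter> T"
      using T(2) that(1) by blast
    ultimately obtain U' where U': "U' \<subseteq> W \<inter> T" "U' - {y} \<noteq> {}" "openin X (U' - {y})"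
      using crowded_TD_open_punctured_nbhd[OF assms] by meson
    then have "U' - {y} \<subseteq> X interior_of A"
      using T(3) by (intro interior_of_maximal) auto
    then show ?thesis
      using U' by blast
  qed
  then show "y \<in> X closure_of (X interior_of A)"
    using y by (simp add: in_closure_of in_punctured_interior_of)
qed

lemma crowded_TD_derived_set_of_punctured_interiors:
  assumes "crowded X" "TD_space X" "A \<subseteq> topspace X"
  defines "E \<equiv> A \<inter> punctured_interior_of X A
               \<union> (topspace X - A) \<inter> punctured_interior_of X (topspace X - A)"
  shows "E \<union> X derived_set_of E
           = X derived_set_of (punctured_interior_of X A \<union> punctured_interior_of X (topspace X - A))"
proof -
  let ?P = "punctured_interior_of X A \<union> punctured_interior_of X (topspace X - A)"
  have E: "E = X interior_of A \<union> X interior_of (topspace X - A)"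
    unfolding E_def using Int_punctured_interior_of_eq_interior_of[OF assms(3)]
      Int_punctured_interior_of_eq_interior_of[of "topspace X - A" X] by auto
  have "openin X E"
    unfolding E by (intro openin_Un openin_interior_of)
  have "E \<subseteq> ?P"
    unfolding E_def by blast
  moreover have "X closure_of (X interior_of A) \<subseteq> X closure_of E"
    "X closure_of (X interior_of (topspace X - A)) \<subseteq> X closure_of E"
    unfolding E by (intro closure_of_mono Un_upper1 Un_upper2)+
  then have "?P \<subseteq> X closure_of E"
    using crowded_TD_punctured_interior_of_subset_closure_of_interior_of[OF assms(1,2), of A]
      crowded_TD_punctured_interior_of_subset_closure_of_interior_of[OF assms(1,2), of "topspace X - A"]
    by blast
  ultimately have derived_eq: "X derived_set_of ?P = X closure_of E"
    using crowded_TD_derived_set_of_between_open_and_closure[OF assms(1,2) \<open>openin X E\<close>] by blast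
  have closure_eq: "E \<union> X derived_set_of E = X closure_of E"
    using crowded_TD_derived_set_of_open[OF assms(1,2) \<open>openin X E\<close>]
      closure_of_subset[OF openin_subset[OF \<open>openin X E\<close>]] by (simp add: Un_absorb1)
  show ?thesis
    by (simp only: derived_eq closure_eq)
qed

lemma dsem_subset_topspace:
  "(\<forall>p. V p \<subseteq> topspace X) \<Longrightarrow> dsem X V \<phi> \<subseteq> topspace X"
  by (induction \<phi>) (auto simp: derived_set_of_subset_topspace)

lemma dsem_Box: "dsem X V (Box \<phi>) = punctured_interior_of X (dsem X V \<phi>)"
  by (simp add: punctured_interior_of_def)

lemma crowded_TD_dsem_DiaS_BoxS_excluded_middle:
  assumes "crowded X" "TD_space X" "\<forall>p. V p \<subseteq> topspace X"
  shows "dsem X V (DiaS (Disj (BoxS \<phi>) (BoxS (Neg \<phi>))))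
           = dsem X V (Dia (Disj (Box \<phi>) (Box (Neg \<phi>))))"
  using crowded_TD_derived_set_of_punctured_interiors[OF assms(1,2) dsem_subset_topspace[OF assms(3)]]
  by (simp only: DiaS_def BoxS_def dsem_Box dsem.simps(3,4,5,7))

theorem lemma8:
  fixes X :: "'a topology"
  assumes "crowded X" and "TD_space X"
  shows "(\<forall>U x. openin X U \<and> x \<in> U \<longrightarrow>
            (\<exists>U'. openin X U' \<and> x \<in> U' \<and> U' \<subseteq> U \<and> U' - {x} \<noteq> {} \<and> openin X (U' - {x})))
       \<and> (\<forall>U S. openin X U \<and> S \<subseteq> topspace X \<and> U \<subseteq> X closure_of S \<longrightarrow> U \<subseteq> X derived_set_of S)
       \<and> (\<forall>S. S \<subseteq> topspace X \<longrightarrow>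
            X interior_of (X closure_of S) = X interior_of (X derived_set_of S))
       \<and> (\<forall>(V :: 'v \<Rightarrow> 'a set) \<phi>. (\<forall>p. V p \<subseteq> topspace X) \<longrightarrow>
            dsem X V (DiaS (Disj (BoxS \<phi>) (BoxS (Neg \<phi>))))
              = dsem X V (Dia (Disj (Box \<phi>) (Box (Neg \<phi>)))))"
proof (intro conjI allI impI)
  fix U x assume "openin X U \<and> x \<in> U"
  then show "\<exists>U'. openin X U' \<and> x \<in> U' \<and> U' \<subseteq> U \<and> U' - {x} \<noteq> {} \<and> openin X (U' - {x})"
    using crowded_TD_open_punctured_nbhd[OF assms] by blast
next
  fix U S assume "openin X U \<and> S \<subseteq> topspace X \<and> U \<subseteq> X closure_of S"
  then show "U \<subseteq> X derived_set_of S"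
    using crowded_TD_open_subset_closure_of_imp_derived_set_of[OF assms] by blast
next
  fix S :: "'a set"
  show "X interior_of (X closure_of S) = X interior_of (X derived_set_of S)"
    by (rule crowded_TD_interior_of_closure_of_eq_derived_set_of[OF assms])
next
  fix V :: "'v \<Rightarrow> 'a set" and \<phi> assume "\<forall>p. V p \<subseteq> topspace X"
  then show "dsem X V (DiaS (Disj (BoxS \<phi>) (BoxS (Neg \<phi>))))
               = dsem X V (Dia (Disj (Box \<phi>) (Box (Neg \<phi>))))"
    by (rule crowded_TD_dsem_DiaS_BoxS_excluded_middle[OF assms])
qed

end
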